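(* If $n\equiv 0$ or $n\equiv 1\pmod 4$, then $\mathcal{AM}_n$ is generated by $\mathcal{AO}_n\cup\{h\}$.
   Context: Let $n\geqslant 2$, $\Omega_n=\{1<2<\cdots<n\}$ and $\mathcal{I}_n$ the monoid of all partial injective maps of $\Omega_n$, composed left to right. $\mathcal{AI}_n$ is the set of all $\alpha\in\mathcal{I}_n$ with $\alpha=\sigma|_{\mathrm{Dom}(\alpha)}$ for some even permutation $\sigma$; $\mathcal{POI}_n$ (resp. $\mathcal{PMI}_n$) is the set of order-preserving (resp. order-preserving or order-reversing) elements; $\mathcal{AO}_n=\mathcal{AI}_n\cap\mathcal{POI}_n$, $\mathcal{AM}_n=\mathcal{AI}_n\cap\mathcal{PMI}_n$. $h$ is the permutation $i\mapsto n+1-i$ of $\Omega_n$ (which lies in $\mathcal{AM}_n$ when $n\equiv 0,1\pmod 4$). *)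

theory Defs
  imports "HOL-Combinatorics.Permutations"
begin

text \<open>Partial injective maps of Omega_n = {1..n}, represented as partial functions
  nat \<rightharpoonup> nat with domain and range inside {1..n}.\<close>

definition PI :: "nat \<Rightarrow> (nat \<rightharpoonup> nat) set" where
  "PI n = {\<alpha>. dom \<alpha> \<subseteq> {1..n} \<and> ran \<alpha> \<subseteq> {1..n} \<and> inj_on \<alpha> (dom \<alpha>)}"

text \<open>Composition left to right: first alpha, then beta.\<close>
definition pcomp :: "(nat \<rightharpoonup> nat) \<Rightarrow> (nat \<rightharpoonup> nat) \<Rightarrow> (nat \<rightharpoonup> nat)" where
  "pcomp \<alpha> \<beta> = \<beta> \<circ>\<^sub>m \<alpha>"

definition AI :: "nat \<Rightarrow> (nat \<rightharpoonup> nat) set" where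
  "AI n = {\<alpha> \<in> PI n. \<exists>\<sigma>. \<sigma> permutes {1..n} \<and> evenperm \<sigma> \<and>
                         (\<forall>x \<in> dom \<alpha>. \<alpha> x = Some (\<sigma> x))}"

definition POI :: "nat \<Rightarrow> (nat \<rightharpoonup> nat) set" where
  "POI n = {\<alpha> \<in> PI n. \<forall>x \<in> dom \<alpha>. \<forall>y \<in> dom \<alpha>. x < y \<longrightarrow> the (\<alpha> x) < the (\<alpha> y)}"

definition PMI :: "nat \<Rightarrow> (nat \<rightharpoonup> nat) set" where
  "PMI n = POI n \<union>
     {\<alpha> \<in> PI n. \<forall>x \<in> dom \<alpha>. \<forall>y \<in> dom \<alpha>. x < y \<longrightarrow> the (\<alpha> x) > the (\<alpha> y)}"

definition AO :: "nat \<Rightarrow> (nat \<rightharpoonup> nat) set" where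
  "AO n = AI n \<inter> POI n"

definition AM :: "nat \<Rightarrow> (nat \<rightharpoonup> nat) set" where
  "AM n = AI n \<inter> PMI n"

definition hrev :: "nat \<Rightarrow> (nat \<rightharpoonup> nat)" where
  "hrev n = (\<lambda>i. if i \<in> {1..n} then Some (n + 1 - i) else None)"

definition pid :: "nat \<Rightarrow> (nat \<rightharpoonup> nat)" where
  "pid n = (\<lambda>i. if i \<in> {1..n} then Some i else None)"

inductive_set generated :: "nat \<Rightarrow> (nat \<rightharpoonup> nat) set \<Rightarrow> (nat \<rightharpoonup> nat) set"
  for n :: nat and A :: "(nat \<rightharpoonup> nat) set" where
  gen_id: "pid n \<in> generated n A"
| gen_base: "a \<in> A \<Longrightarrow> a \<in> generated n A"
| gen_comp: "a \<in> generated n A \<Longrightarrow> b \<in> generated n A \<Longrightarrow> pcomp a b \<in> generated n A"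

end

theory Submission
  imports Defs
begin

text \<open>The reversal h of {1..n} is the product of the floor(n/2) transpositions (i, n+1-i),
  so it is even exactly when n mod 4 is 0 or 1, and then h lies in AM n. An element of AM n
  is either order-preserving, hence in AO n, or order-reversing; in the latter case
  alpha = (alpha h) h, where alpha h is order-preserving and still the restriction of an even
  permutation. Conversely AM n contains the identity and is closed under composition.\<close>

definition rev_interval :: "nat \<Rightarrow> nat \<Rightarrow> nat \<Rightarrow> nat" where
  "rev_interval a k i = (if a \<le> i \<and> i < a + k then 2 * a + k - 1 - i else i)"

lemma rev_interval_involution: "rev_interval a k (rev_interval a k i) = i"
  by (auto simp: rev_interval_def)

lemma rev_interval_permutes: "rev_interval a k permutes {a..<a + k}"
  unfolding permutes_def
proof (intro conjI allI impI)
  fix x assume "x \<notin> {a..<a + k}"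
  then show "rev_interval a k x = x" by (auto simp: rev_interval_def)
next
  fix y show "\<exists>!x. rev_interval a k x = y" by (metis rev_interval_involution)
qed

lemma permutation_rev_interval: "permutation (rev_interval a k)"
  using rev_interval_permutes permutation_permutes by blast

lemma rev_interval_add_2:
  "rev_interval a (k + 2) = transpose a (a + k + 1) \<circ> rev_interval (a + 1) k"
  by (auto simp: rev_interval_def transpose_def fun_eq_iff)

lemma evenperm_rev_interval: "evenperm (rev_interval a k) \<longleftrightarrow> even (k div 2)"
proof (induction k arbitrary: a rule: less_induct)
  case (less k)
  show ?case
  proof (cases "k < 2")
    case True
    then have "rev_interval a k = id" by (auto simp: rev_interval_def fun_eq_iff)
    then show ?thesis using True by (auto simp: less_2_cases_iff)
  next
    case False
    then obtain m where m: "k = m + 2" by (metis add.commute le_Suc_ex not_less)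
    have "evenperm (rev_interval a k)
        \<longleftrightarrow> (evenperm (transpose a (a + m + 1)) \<longleftrightarrow> evenperm (rev_interval (a + 1) m))"
      unfolding m rev_interval_add_2
      by (rule evenperm_comp) (simp_all add: permutation_rev_interval permutation_swap_id)
    also have "\<dots> \<longleftrightarrow> odd (m div 2)" using less m by (simp add: evenperm_swap)
    finally show ?thesis using m by simp
  qed
qed

lemma hrev_eq_rev_interval:
  "hrev n i = (if i \<in> {1..n} then Some (rev_interval 1 n i) else None)"
  by (auto simp: hrev_def rev_interval_def)

lemma rev_interval_permutes_atLeastAtMost: "rev_interval 1 n permutes {1..n}"
  using rev_interval_permutes[of 1 n] by (simp add: atLeastLessThanSuc_atLeastAtMost)

definition increasing_map :: "(nat \<rightharpoonup> nat) \<Rightarrow> bool" where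
  "increasing_map \<alpha> \<longleftrightarrow> (\<forall>x \<in> dom \<alpha>. \<forall>y \<in> dom \<alpha>. x < y \<longrightarrow> the (\<alpha> x) < the (\<alpha> y))"

definition decreasing_map :: "(nat \<rightharpoonup> nat) \<Rightarrow> bool" where
  "decreasing_map \<alpha> \<longleftrightarrow> (\<forall>x \<in> dom \<alpha>. \<forall>y \<in> dom \<alpha>. x < y \<longrightarrow> the (\<alpha> x) > the (\<alpha> y))"

lemma POI_iff: "\<alpha> \<in> POI n \<longleftrightarrow> \<alpha> \<in> PI n \<and> increasing_map \<alpha>"
  by (simp add: POI_def increasing_map_def)

lemma PMI_iff: "\<alpha> \<in> PMI n \<longleftrightarrow> \<alpha> \<in> PI n \<and> (increasing_map \<alpha> \<or> decreasing_map \<alpha>)"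
  by (auto simp: PMI_def POI_iff decreasing_map_def)

lemma dom_pcompD:
  assumes "x \<in> dom (pcomp a b)"
  shows "x \<in> dom a" "the (a x) \<in> dom b" "pcomp a b x = b (the (a x))"
  using assms by (auto simp: pcomp_def map_comp_def split: option.splits)

lemma monotone_map_pcomp:
  shows "increasing_map a \<Longrightarrow> increasing_map b \<Longrightarrow> increasing_map (pcomp a b)"
    and "increasing_map a \<Longrightarrow> decreasing_map b \<Longrightarrow> decreasing_map (pcomp a b)"
    and "decreasing_map a \<Longrightarrow> increasing_map b \<Longrightarrow> decreasing_map (pcomp a b)"
    and "decreasing_map a \<Longrightarrow> decreasing_map b \<Longrightarrow> increasing_map (pcomp a b)"
  unfolding increasing_map_def decreasing_map_def by (metis dom_pcompD)+

lemma PI_pcomp: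
  assumes "a \<in> PI n" "b \<in> PI n"
  shows "pcomp a b \<in> PI n"
proof -
  have "dom (pcomp a b) \<subseteq> dom a" "ran (pcomp a b) \<subseteq> ran b"
    by (auto simp: pcomp_def map_comp_def dom_def ran_def split: option.splits)
  moreover have "inj_on (pcomp a b) (dom (pcomp a b))"
  proof (rule inj_onI)
    fix x y
    assume x: "x \<in> dom (pcomp a b)" and y: "y \<in> dom (pcomp a b)"
      and eq: "pcomp a b x = pcomp a b y"
    obtain u v where u: "a x = Some u" "u \<in> dom b" and v: "a y = Some v" "v \<in> dom b"
      using dom_pcompD[OF x] dom_pcompD[OF y] by (metis domD option.sel)
    have "b u = b v" using eq dom_pcompD(3)[OF x] dom_pcompD(3)[OF y] u v by simp
    then have "a x = a y" using assms(2) u v unfolding PI_def by (auto dest: inj_onD)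
    moreover have "inj_on a (dom a)" using assms(1) by (simp add: PI_def)
    ultimately show "x = y" using u v by (meson domI inj_onD)
  qed
  ultimately show ?thesis using assms unfolding PI_def by blast
qed

lemma AI_pcomp:
  assumes "a \<in> AI n" "b \<in> AI n"
  shows "pcomp a b \<in> AI n"
proof -
  obtain s where s: "s permutes {1..n}" "evenperm s" "\<forall>x \<in> dom a. a x = Some (s x)"
    using assms(1) unfolding AI_def by blast
  obtain t where t: "t permutes {1..n}" "evenperm t" "\<forall>x \<in> dom b. b x = Some (t x)"
    using assms(2) unfolding AI_def by blast
  have "evenperm (t \<circ> s)"
    using s t by (simp add: evenperm_comp permutes_imp_permutation[OF finite_atLeastAtMost])
  moreover have "\<forall>x \<in> dom (pcomp a b). pcomp a b x = Some ((t \<circ> s) x)"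
    using s(3) t(3) by (auto simp: pcomp_def map_comp_def dom_def split: option.splits)
  ultimately show ?thesis
    using assms PI_pcomp permutes_compose[OF s(1) t(1)] unfolding AI_def by blast
qed

lemma PMI_pcomp: "a \<in> PMI n \<Longrightarrow> b \<in> PMI n \<Longrightarrow> pcomp a b \<in> PMI n"
  unfolding PMI_iff by (metis PI_pcomp monotone_map_pcomp)

lemma AM_pcomp: "a \<in> AM n \<Longrightarrow> b \<in> AM n \<Longrightarrow> pcomp a b \<in> AM n"
  unfolding AM_def using AI_pcomp PMI_pcomp by blast

lemma pid_in_AM: "pid n \<in> AM n"
proof -
  have PI: "pid n \<in> PI n" by (auto simp: PI_def pid_def dom_def ran_def inj_on_def)
  then have "pid n \<in> AI n"
    by (auto simp: AI_def pid_def split: if_splits intro!: exI[of _ id] permutes_id)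
  moreover have "increasing_map (pid n)" by (auto simp: increasing_map_def pid_def dom_def)
  ultimately show ?thesis using PI by (simp add: AM_def PMI_iff)
qed

lemma decreasing_map_hrev: "decreasing_map (hrev n)"
  by (auto simp: decreasing_map_def hrev_def dom_def)

lemma hrev_in_AM:
  assumes "n mod 4 = 0 \<or> n mod 4 = 1"
  shows "hrev n \<in> AM n"
proof -
  have "hrev n \<in> PI n" by (auto simp: PI_def hrev_def dom_def ran_def inj_on_def)
  moreover have "\<forall>x \<in> dom (hrev n). hrev n x = Some (rev_interval 1 n x)"
    by (auto simp: hrev_eq_rev_interval dom_def)
  moreover have "evenperm (rev_interval 1 n)"
    using assms by (simp add: evenperm_rev_interval) presburger
  ultimately show ?thesis
    using rev_interval_permutes_atLeastAtMost decreasing_map_hrev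
    by (simp add: AM_def AI_def PMI_iff) blast
qed

lemma pcomp_hrev_hrev:
  assumes "ran \<alpha> \<subseteq> {1..n}"
  shows "pcomp (pcomp \<alpha> (hrev n)) (hrev n) = \<alpha>"
proof
  fix x show "pcomp (pcomp \<alpha> (hrev n)) (hrev n) x = \<alpha> x"
  proof (cases "\<alpha> x")
    case None then show ?thesis by (simp add: pcomp_def)
  next
    case (Some v)
    then have "v \<in> {1..n}" using assms by (auto simp: ran_def)
    then show ?thesis using Some by (auto simp: pcomp_def hrev_def)
  qed
qed

lemma generated_subset:
  assumes "pid n \<in> S" "\<And>a b. a \<in> S \<Longrightarrow> b \<in> S \<Longrightarrow> pcomp a b \<in> S" "A \<subseteq> S"
  shows "generated n A \<subseteq> S"
proof
  fix x assume "x \<in> generated n A"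
  then show "x \<in> S" by induction (use assms in auto)
qed

lemma pcomp_hrev_in_AO:
  assumes "\<alpha> \<in> AI n" "decreasing_map \<alpha>" "hrev n \<in> AI n"
  shows "pcomp \<alpha> (hrev n) \<in> AO n"
proof -
  have "pcomp \<alpha> (hrev n) \<in> AI n" using assms(1,3) by (rule AI_pcomp)
  moreover have "increasing_map (pcomp \<alpha> (hrev n))"
    using assms(2) decreasing_map_hrev by (rule monotone_map_pcomp(4))
  ultimately show ?thesis by (simp add: AO_def AI_def POI_iff)
qed

theorem lemma5p1:
  fixes n :: nat
  assumes "n \<ge> 2"
    and "n mod 4 = 0 \<or> n mod 4 = 1"
  shows "AM n = generated n (AO n \<union> {hrev n})"
proof
  have h: "hrev n \<in> AM n" using hrev_in_AM[OF assms(2)] .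
  show "generated n (AO n \<union> {hrev n}) \<subseteq> AM n"
    by (rule generated_subset) (use h pid_in_AM AM_pcomp in \<open>auto simp: AO_def AM_def PMI_def\<close>)
  show "AM n \<subseteq> generated n (AO n \<union> {hrev n})"
  proof
    fix \<alpha> assume \<alpha>: "\<alpha> \<in> AM n"
    then consider "\<alpha> \<in> AO n" | "decreasing_map \<alpha>" by (auto simp: AM_def AO_def PMI_iff POI_iff)
    then show "\<alpha> \<in> generated n (AO n \<union> {hrev n})"
    proof cases
      case 1 then show ?thesis by (simp add: generated.gen_base)
    next
      case 2
      with \<alpha> h have "pcomp \<alpha> (hrev n) \<in> AO n" by (simp add: AM_def pcomp_hrev_in_AO)
      then have "pcomp (pcomp \<alpha> (hrev n)) (hrev n) \<in> generated n (AO n \<union> {hrev n})"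
        by (simp add: generated.gen_base generated.gen_comp)
      moreover have "ran \<alpha> \<subseteq> {1..n}" using \<alpha> by (simp add: AM_def AI_def PI_def)
      ultimately show ?thesis by (simp add: pcomp_hrev_hrev)
    qed
  qed
qed

end
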